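(* Let $k$ be an algebraically closed field complete with respect to a nontrivial non-Archimedean absolute value, with residue field $\tilde k$ of characteristic $p > 0$. Let $\varphi \in k(z)$ be a nonconstant rational function with good reduction such that all of the critical points of $\varphi$ have the same image in $\mathbb{P}^1(\tilde k)$ under the reduction map. Then $\deg(\varphi) \equiv 0$ or $1 \pmod p$.
   Context: $\mathcal{O}_k = \{x \in k : |x| \leq 1\}$, $\mathfrak{m} = \{x : |x| < 1\}$, $\tilde k = \mathcal{O}_k/\mathfrak{m}$. The reduction map $\mathrm{red} : \mathbb{P}^1(k) \to \mathbb{P}^1(\tilde k)$ sends $x \in \mathcal{O}_k$ to $x \bmod \mathfrak{m}$ and all other points to $\infty$. Write $\varphi = f/g$ with $f, g \in \mathcal{O}_k[z]$ having no common root and with some coefficient of $f$ or $g$ of absolute value $1$; let $\tilde f, \tilde g \in \tilde k[z]$ be their reductions. The reduction $\tilde\varphi$ is $\tilde f/\tilde g$ if $\tilde g \neq 0$ and the constant $\infty$ otherwise. $\varphi$ has good reduction if $\deg(\varphi) = \deg(\tilde \varphi)$. Critical points of $\varphi$ are the points $x \in \mathbb{P}^1(k)$ at which the derivative of $\sigma \circ \varphi$ (in a local coordinate at $x$, i.e. $z$ if $x$ finite and $1/z$ if $x=\infty$) vanishes, for a fractional linear $\sigma$ with $\sigma(\varphi(x)) \neq \infty$. *)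

theory Defs
  imports "HOL-Computational_Algebra.Computational_Algebra"
begin

definition nonarch_abs :: "('a::field \<Rightarrow> real) \<Rightarrow> bool" where
  "nonarch_abs av \<longleftrightarrow>
     (\<forall>x. av x \<ge> 0) \<and> (\<forall>x. av x = 0 \<longleftrightarrow> x = 0) \<and>
     (\<forall>x y. av (x * y) = av x * av y) \<and>
     (\<forall>x y. av (x + y) \<le> max (av x) (av y))"

definition nontrivial_abs :: "('a::field \<Rightarrow> real) \<Rightarrow> bool" where
  "nontrivial_abs av \<longleftrightarrow> (\<exists>x. x \<noteq> 0 \<and> av x \<noteq> 1)"

definition complete_abs :: "('a::field \<Rightarrow> real) \<Rightarrow> bool" where
  "complete_abs av \<longleftrightarrow>
     (\<forall>X :: nat \<Rightarrow> 'a.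
        (\<forall>e>0. \<exists>N. \<forall>m\<ge>N. \<forall>n\<ge>N. av (X m - X n) < e) \<longrightarrow>
        (\<exists>L. \<forall>e>0. \<exists>N. \<forall>n\<ge>N. av (X n - L) < e))"

definition alg_closed_field :: "'a::field itself \<Rightarrow> bool" where
  "alg_closed_field _ \<longleftrightarrow> (\<forall>q :: 'a poly. degree q \<ge> 1 \<longrightarrow> (\<exists>x. poly q x = 0))"

text \<open>The residue field: a field \<open>'b\<close> with a surjective ring homomorphism
 \<open>red : O_k \<rightarrow> 'b\<close> whose kernel is the maximal ideal; so \<open>'b \<cong> O_k/m\<close>.
 (Values of \<open>red\<close> outside \<open>O_k\<close> are irrelevant.)\<close>

definition residue_map :: "('a::field \<Rightarrow> real) \<Rightarrow> ('a \<Rightarrow> 'b::field) \<Rightarrow> bool" where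
  "residue_map av red \<longleftrightarrow>
     (\<forall>x y. av x \<le> 1 \<longrightarrow> av y \<le> 1 \<longrightarrow> red (x + y) = red x + red y) \<and>
     (\<forall>x y. av x \<le> 1 \<longrightarrow> av y \<le> 1 \<longrightarrow> red (x * y) = red x * red y) \<and>
     red 1 = 1 \<and>
     (\<forall>c. \<exists>x. av x \<le> 1 \<and> red x = c) \<and>
     (\<forall>x. av x \<le> 1 \<longrightarrow> (red x = 0 \<longleftrightarrow> av x < 1))"

text \<open>Reduction map \<open>P^1(k) \<rightarrow> P^1(k~)\<close>; points of \<open>P^1\<close> are \<open>Some x\<close> (finite) or
 \<open>None\<close> (\<open>\<infinity>\<close>).\<close>

definition red_pt :: "('a::field \<Rightarrow> real) \<Rightarrow> ('a \<Rightarrow> 'b::field) \<Rightarrow> 'a option \<Rightarrow> 'b option" where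
  "red_pt av red P = (case P of None \<Rightarrow> None
       | Some x \<Rightarrow> (if av x \<le> 1 then Some (red x) else None))"

text \<open>Degree of the rational function \<open>P/Q\<close> (after cancelling a common factor of maximal degree, i.e. the gcd).
 If \<open>Q = 0\<close> the function is the constant \<open>\<infinity>\<close>, of degree 0.\<close>

definition rat_deg :: "'a::field poly \<Rightarrow> 'a poly \<Rightarrow> nat" where
  "rat_deg P Q = (if Q = 0 then 0
     else max (degree P) (degree Q) - Max {degree h | h. h dvd P \<and> h dvd Q})"

text \<open>Local coordinate \<open>w = 1/z\<close> at \<open>\<infinity>\<close>: \<open>w^d P(1/w)\<close>.\<close>

definition at_infty :: "nat \<Rightarrow> 'a::field poly \<Rightarrow> 'a poly" where
  "at_infty d P = (\<Sum>i\<le>d. monom (coeff P i) (d - i))"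

text \<open>The derivative of \<open>\<sigma> \<circ> (P/Q)\<close> vanishes at the finite point \<open>x\<close> (in the
 coordinate \<open>z\<close>), for some fractional linear \<open>\<sigma>(w) = (a w + b)/(c w + e)\<close>
 with \<open>\<sigma>((P/Q)(x)) \<noteq> \<infinity>\<close>, i.e. with the denominator \<open>c P + e Q\<close> nonvanishing at
 \<open>x\<close>.  The derivative of the rational function \<open>N/D\<close> is \<open>(N' D - N D')/D^2\<close>.\<close>

definition crit_fin :: "'a::field poly \<Rightarrow> 'a poly \<Rightarrow> 'a \<Rightarrow> bool" where
  "crit_fin P Q x \<longleftrightarrow>
     (\<exists>a b c e. a * e - b * c \<noteq> 0 \<and>
        (let N = smult a P + smult b Q; D = smult c P + smult e Q in
          poly D x \<noteq> 0 \<and> poly (pderiv N * D - N * pderiv D) x = 0))"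

definition crit_points :: "'a::field poly \<Rightarrow> 'a poly \<Rightarrow> 'a option set" where
  "crit_points f g =
     {Some x | x. crit_fin f g x} \<union>
     (let d = max (degree f) (degree g) in
       if crit_fin (at_infty d f) (at_infty d g) 0 then {None} else {})"

end

theory Submission
  imports Defs
begin

(*
  The finite critical points of f/g are the zeros of the Wronskian W = f'g - fg', a polynomial of
  degree at most 2d - 2, with equality iff \<infinity> is not critical.  Good reduction makes the reductions
  F, G of f, g coprime of degree d.  If all critical points reduce to one point, then either the
  reduction W(F,G) of W is constant, or \<infinity> is not critical and W(F,G) = u (z - c)^(2d-2).  In the
  first case F''G = FG'', so coprimality forces F'' = G'' = 0.  In the second case the operator
  L = (z-c)^2 D^2 - 2(d-1)(z-c) D + d(d-1) satisfies L(F) G = F L(G) and lowers degree, so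
  L(F) = L(G) = 0, and evaluating at c gives d(d-1) = 0 in the residue field.  Either way the
  residue characteristic divides d(d-1).
*)

section \<open>The Wronskian and critical points\<close>

definition wronskian :: "'a::idom poly \<Rightarrow> 'a poly \<Rightarrow> 'a poly" where
  "wronskian f g = pderiv f * g - f * pderiv g"

lemma pderiv_wronskian:
  "pderiv (wronskian f g) = pderiv (pderiv f) * g - f * pderiv (pderiv g)"
  by (simp add: wronskian_def pderiv_diff pderiv_mult algebra_simps)

lemma degree_pderiv_le: "degree (pderiv p) \<le> degree p - 1"
  by (rule degree_le) (auto simp: coeff_pderiv coeff_eq_0)

lemma coeff_mult_degree_le:
  assumes "degree p \<le> a" and "degree q \<le> b" and "a \<le> m"
  shows "coeff (p * q) m = (\<Sum>i=m-b..a. coeff p i * coeff q (m - i))"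
  unfolding coeff_mult
proof (rule sum.mono_neutral_right)
  show "\<forall>i\<in>{..m} - {m-b..a}. coeff p i * coeff q (m - i) = 0"
  proof
    fix i assume "i \<in> {..m} - {m-b..a}"
    then have "degree p < i \<or> degree q < m - i" using assms by auto
    then show "coeff p i * coeff q (m - i) = 0" by (auto simp: coeff_eq_0)
  qed
qed (use assms in auto)

context
  fixes f g :: "'a::idom poly" and k :: nat
  assumes deg_f: "degree f \<le> k + 2" and deg_g: "degree g \<le> k + 2"
begin

private lemma degree_pderiv_f: "degree (pderiv f) \<le> k + 1"
  and degree_pderiv_g: "degree (pderiv g) \<le> k + 1"
  using degree_pderiv_le[of f] degree_pderiv_le[of g] deg_f deg_g by linarith+

lemma coeff_wronskian_top:
  "coeff (wronskian f g) (2*k+2) = coeff f (k+2) * coeff g (k+1) - coeff f (k+1) * coeff g (k+2)"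
proof -
  have "coeff (pderiv f * g) (2*k+2)
      = coeff (pderiv f) k * coeff g (k+2) + coeff (pderiv f) (k+1) * coeff g (k+1)"
    using coeff_mult_degree_le[OF degree_pderiv_f deg_g, of "2*k+2"]
    by (simp add: atLeastAtMostSuc_conv)
  moreover have "coeff (f * pderiv g) (2*k+2)
      = coeff f (k+1) * coeff (pderiv g) (k+1) + coeff f (k+2) * coeff (pderiv g) k"
    using coeff_mult_degree_le[OF deg_f degree_pderiv_g, of "2*k+2"]
    by (simp add: atLeastAtMostSuc_conv)
  moreover have "(of_nat (k+2) :: 'a) = of_nat (k+1) + 1" by simp
  ultimately show ?thesis
    by (simp add: wronskian_def coeff_pderiv algebra_simps del: of_nat_Suc of_nat_add)
qed

lemma degree_wronskian_le: "degree (wronskian f g) \<le> 2*k+2"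
proof (rule degree_le, intro allI impI)
  fix m assume m: "2*k+2 < m"
  consider "m = 2*k+3" | "m - (k+2) > k+1" "m - (k+1) > k+2" using m by linarith
  then have sums: "(\<Sum>i=m-(k+2)..k+1. coeff (pderiv f) i * coeff g (m - i))
      = (\<Sum>i=m-(k+1)..k+2. coeff f i * coeff (pderiv g) (m - i))"
    by cases (simp_all add: coeff_pderiv numeral_3_eq_3 numeral_2_eq_2)
  have prods: "coeff (pderiv f * g) m = (\<Sum>i=m-(k+2)..k+1. coeff (pderiv f) i * coeff g (m - i))"
    "coeff (f * pderiv g) m = (\<Sum>i=m-(k+1)..k+2. coeff f i * coeff (pderiv g) (m - i))"
    using coeff_mult_degree_le[OF degree_pderiv_f deg_g, of m]
      coeff_mult_degree_le[OF deg_f degree_pderiv_g, of m] m by simp_all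
  show "coeff (wronskian f g) m = 0"
    unfolding wronskian_def coeff_diff prods sums by simp
qed

end

lemma poly_wronskian_0: "poly (wronskian f g) 0 = coeff f 1 * coeff g 0 - coeff f 0 * coeff g 1"
  by (simp add: wronskian_def poly_0_coeff_0 coeff_pderiv coeff_mult_0 algebra_simps)

lemma crit_fin_if_wronskian_root:
  fixes f g :: "'a::field poly"
  assumes W: "poly (wronskian f g) x = 0" and no_common_root: "\<not> (poly f x = 0 \<and> poly g x = 0)"
  shows "crit_fin f g x"
proof (cases "poly g x = 0")
  case False
  show ?thesis unfolding crit_fin_def
    by (rule exI[of _ 1], rule exI[of _ 0], rule exI[of _ 0], rule exI[of _ 1])
      (use W False in \<open>simp add: wronskian_def\<close>)
next
  case True
  then have "poly f x \<noteq> 0" using no_common_root by simp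
  show ?thesis unfolding crit_fin_def
    by (rule exI[of _ 0], rule exI[of _ 1], rule exI[of _ 1], rule exI[of _ 0])
      (use W True \<open>poly f x \<noteq> 0\<close> in \<open>simp add: wronskian_def algebra_simps\<close>)
qed

lemma coeff_at_infty: "coeff (at_infty d P) j = (if j \<le> d then coeff P (d - j) else 0)"
proof -
  have "coeff (at_infty d P) j = (\<Sum>i\<le>d. if i = d - j \<and> j \<le> d then coeff P i else 0)"
    unfolding at_infty_def coeff_sum coeff_monom by (intro sum.cong) auto
  also have "\<dots> = (if j \<le> d then coeff P (d - j) else 0)"
    by (cases "j \<le> d") simp_all
  finally show ?thesis .
qed

lemma coeff_max_degree_nonzero:
  assumes "f \<noteq> 0 \<or> g \<noteq> 0"
  shows "coeff f (max (degree f) (degree g)) \<noteq> 0 \<or> coeff g (max (degree f) (degree g)) \<noteq> 0"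
proof (cases "degree f \<le> degree g \<and> g \<noteq> 0")
  case False
  then have "max (degree f) (degree g) = degree f" and "f \<noteq> 0" using assms by (auto simp: max_def)
  then show ?thesis by simp
qed (simp add: max_def)

text \<open>At \<open>w = 0\<close> the Wronskian of the polynomials in the coordinate \<open>w = 1/z\<close> is, up to sign,
  the coefficient of \<open>z\<^bsup>2k+2\<^esup>\<close> in \<open>W(f,g)\<close>.\<close>

lemma degree_wronskian_if_infty_not_crit:
  fixes f g :: "'a::field poly"
  assumes deg: "max (degree f) (degree g) = k+2"
    and not_crit: "\<not> crit_fin (at_infty (k+2) f) (at_infty (k+2) g) 0"
  shows "degree (wronskian f g) = 2*k+2"
proof -
  let ?F = "at_infty (k+2) f" and ?G = "at_infty (k+2) g"
  have "f \<noteq> 0 \<or> g \<noteq> 0" using deg by auto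
  then have "\<not> (poly ?F 0 = 0 \<and> poly ?G 0 = 0)"
    using coeff_max_degree_nonzero[of f g] deg by (simp add: poly_0_coeff_0 coeff_at_infty)
  then have "poly (wronskian ?F ?G) 0 \<noteq> 0"
    using crit_fin_if_wronskian_root not_crit by blast
  then have "coeff f (k+1) * coeff g (k+2) - coeff f (k+2) * coeff g (k+1) \<noteq> 0"
    by (simp add: poly_wronskian_0 coeff_at_infty)
  moreover have df: "degree f \<le> k+2" and dg: "degree g \<le> k+2" using deg by auto
  ultimately have "coeff (wronskian f g) (2*k+2) \<noteq> 0"
    unfolding coeff_wronskian_top[OF df dg] by (metis right_minus_eq)
  then have "2*k+2 \<le> degree (wronskian f g)" by (rule le_degree)
  with degree_wronskian_le[OF df dg] show ?thesis by (rule antisym)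
qed

section \<open>Coprime polynomials with a degenerate Wronskian\<close>

lemma coeff_pderiv_pderiv:
  "coeff (pderiv (pderiv p)) k = of_nat ((k+1)*(k+2)) * coeff p (k+2)"
  by (simp add: coeff_pderiv algebra_simps)

lemma pderiv_pderiv_eq_0_if_dvd:
  fixes p :: "'a::field poly"
  assumes "p dvd pderiv (pderiv p)"
  shows "pderiv (pderiv p) = 0"
proof (rule ccontr)
  assume nz: "pderiv (pderiv p) \<noteq> 0"
  have "degree p \<le> degree (pderiv (pderiv p))" using dvd_imp_degree_le[OF assms nz] .
  also have "\<dots> \<le> degree p - 2"
    using degree_pderiv_le[of "pderiv p"] degree_pderiv_le[of p] by linarith
  finally have "degree p = 0" by simp
  then show False using nz by (auto elim: degree_eq_zeroE simp: pderiv_pCons)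
qed

text \<open>Over an arbitrary field the polynomial ring has no gcd instance, so Bezout's identity is
  obtained from a combination of least degree.\<close>

lemma bezout_poly_field:
  fixes f g :: "'a::field poly"
  assumes cop: "coprime f g"
  obtains a b where "a * f + b * g = 1"
proof (cases "g = 0")
  case True
  then have "is_unit f" using cop by simp
  then obtain u where "1 = f * u" by (rule dvdE)
  then show thesis using that[of u 0] by (simp add: mult.commute)
next
  case False
  let ?comb = "\<lambda>n. \<exists>a b. a * f + b * g \<noteq> 0 \<and> degree (a * f + b * g) = n"
  define n where "n = (LEAST n. ?comb n)"
  have "?comb (degree g)"
    by (rule exI[of _ 0], rule exI[of _ 1]) (simp add: False)
  then have "?comb n" unfolding n_def by (rule LeastI)
  then obtain a b where least: "a * f + b * g \<noteq> 0" "degree (a * f + b * g) = n" by blast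
  define h where "h = a * f + b * g"
  have h_dvd: "h dvd c * f + e * g" for c e
  proof -
    define q where "q = c * f + e * g"
    have r: "q mod h = (c - q div h * a) * f + (e - q div h * b) * g"
      using div_mult_mod_eq[of q h] unfolding q_def h_def by (simp add: algebra_simps)
    have "q mod h = 0"
    proof (rule ccontr)
      assume ne: "q mod h \<noteq> 0"
      have "?comb (degree (q mod h))"
        by (rule exI[of _ "c - q div h * a"], rule exI[of _ "e - q div h * b"])
          (simp add: ne r[symmetric])
      then have "n \<le> degree (q mod h)" unfolding n_def by (rule Least_le)
      moreover have "degree (q mod h) < degree h"
        using degree_mod_less'[OF _ ne] least(1) unfolding h_def by simp
      ultimately show False using least(2) unfolding h_def by simp
    qed
    then show ?thesis unfolding q_def by (simp add: mod_eq_0_iff_dvd)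
  qed
  have "h dvd f" "h dvd g" using h_dvd[of 1 0] h_dvd[of 0 1] by simp_all
  then have "is_unit h" by (rule coprime_common_divisor[OF cop])
  then obtain u where "1 = h * u" by (rule dvdE)
  then have "(u * a) * f + (u * b) * g = 1" unfolding h_def by (simp add: algebra_simps)
  then show thesis by (rule that)
qed

lemma coprime_dvd_mult_cancel:
  fixes f g h :: "'a::field poly"
  assumes "coprime f g" and "f dvd h * g"
  shows "f dvd h"
proof -
  obtain a b where ab: "a * f + b * g = 1" using bezout_poly_field[OF assms(1)] .
  obtain q where "h * g = f * q" using assms(2) by blast
  then have "h = f * (h * a + b * q)"
    using arg_cong[OF ab, of "(*) h"] by (simp add: algebra_simps)
  then show ?thesis by (rule dvdI)
qed

lemma of_nat_eq_0_if_pderiv_wronskian_eq_0: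
  fixes f g :: "'a::field poly"
  assumes cop: "coprime f g" and deg: "max (degree f) (degree g) = k+2"
    and W: "pderiv (wronskian f g) = 0"
  shows "(of_nat ((k+1)*(k+2)) :: 'a) = 0"
proof -
  have eq: "pderiv (pderiv f) * g = f * pderiv (pderiv g)"
    using W by (simp add: pderiv_wronskian)
  have "f dvd pderiv (pderiv f) * g" unfolding eq by simp
  then have "f dvd pderiv (pderiv f)" by (rule coprime_dvd_mult_cancel[OF cop])
  then have "pderiv (pderiv f) = 0" by (rule pderiv_pderiv_eq_0_if_dvd)
  then have f2: "of_nat ((k+1)*(k+2)) * coeff f (k+2) = 0"
    by (simp only: coeff_pderiv_pderiv[symmetric] coeff_0)
  have cop': "coprime g f" using cop by (simp add: coprime_commute)
  have "g dvd pderiv (pderiv g) * f" unfolding mult.commute[of _ f] eq[symmetric] by simp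
  then have "g dvd pderiv (pderiv g)" by (rule coprime_dvd_mult_cancel[OF cop'])
  then have "pderiv (pderiv g) = 0" by (rule pderiv_pderiv_eq_0_if_dvd)
  then have g2: "of_nat ((k+1)*(k+2)) * coeff g (k+2) = 0"
    by (simp only: coeff_pderiv_pderiv[symmetric] coeff_0)
  have "f \<noteq> 0 \<or> g \<noteq> 0" using deg by auto
  then have "coeff f (k+2) \<noteq> 0 \<or> coeff g (k+2) \<noteq> 0"
    using coeff_max_degree_nonzero[of f g, unfolded deg] by blast
  then show ?thesis using f2 g2 by (metis mult_eq_0_iff)
qed

text \<open>With \<open>x = z - c\<close> this is \<open>x\<^sup>2 D\<^sup>2 - 2(k+1) x D + (k+1)(k+2)\<close>, which multiplies
  \<open>x\<^sup>m\<close> by \<open>(m-k-1)(m-k-2)\<close>; so it lowers degree \<open>k+2\<close> to \<open>k+1\<close>, and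
  \<open>L(f) g - f L(g)\<close> is a combination of \<open>W(f,g)\<close> and \<open>W(f,g)'\<close> that vanishes
  when \<open>W(f,g)\<close> is a multiple of \<open>x\<^bsup>2k+2\<^esup>\<close>.\<close>

definition euler_op :: "'a::idom \<Rightarrow> nat \<Rightarrow> 'a poly \<Rightarrow> 'a poly" where
  "euler_op c k p = [:-c,1:] * ([:-c,1:] * pderiv (pderiv p))
     - smult (of_nat (2*(k+1))) ([:-c,1:] * pderiv p) + smult (of_nat ((k+1)*(k+2))) p"

lemma euler_op_wronskian:
  "euler_op c k f * g - f * euler_op c k g =
     [:-c,1:] * ([:-c,1:] * pderiv (wronskian f g))
       - smult (of_nat (2*(k+1))) ([:-c,1:] * wronskian f g)"
proof -
  have smult_conv: "smult a p = [:a:] * p" for a and p :: "'a poly" by simp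
  show ?thesis
    unfolding euler_op_def pderiv_wronskian unfolding wronskian_def smult_conv by algebra
qed

lemma poly_euler_op: "poly (euler_op c k p) c = of_nat ((k+1)*(k+2)) * poly p c"
  by (simp add: euler_op_def)

lemma coeff_linear_mult_Suc:
  fixes c :: "'a::comm_ring_1"
  shows "coeff ([:-c,1:] * q) (Suc n) = coeff q n - c * coeff q (Suc n)"
  by simp

lemma degree_euler_op:
  fixes p :: "'a::idom poly"
  assumes deg: "degree p \<le> k+2"
  shows "degree (euler_op c k p) \<le> k+1"
proof (rule degree_le, intro allI impI)
  fix m assume "k+1 < m"
  define j where "j = m - 2"
  then have m: "m = Suc (Suc j)" and "k \<le> j" using \<open>k+1 < m\<close> by simp_all
  have high: "coeff p (Suc (Suc (Suc j))) = 0" "coeff p (Suc (Suc (Suc (Suc j)))) = 0"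
    using deg \<open>k \<le> j\<close> by (simp_all add: coeff_eq_0)
  have "coeff ([:-c,1:] * ([:-c,1:] * pderiv (pderiv p))) m
      = of_nat (Suc j) * of_nat (Suc (Suc j)) * coeff p (Suc (Suc j))"
    unfolding m coeff_linear_mult_Suc using high by (simp add: coeff_pderiv del: of_nat_Suc)
  moreover have "coeff ([:-c,1:] * pderiv p) m = of_nat (Suc (Suc j)) * coeff p (Suc (Suc j))"
    unfolding m coeff_linear_mult_Suc using high by (simp add: coeff_pderiv del: of_nat_Suc)
  ultimately have "coeff (euler_op c k p) m = (of_nat (Suc j) * of_nat (Suc (Suc j))
      - of_nat (2*(k+1)) * of_nat (Suc (Suc j)) + of_nat ((k+1)*(k+2))) * coeff p (Suc (Suc j))"
    unfolding euler_op_def coeff_add coeff_diff coeff_smult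
    by (simp add: m algebra_simps del: of_nat_Suc)
  also have "\<dots> = 0"
  proof (cases "j = k")
    case True
    have "Suc k * Suc (Suc k) + (k+1)*(k+2) = 2*(k+1) * Suc (Suc k)" by simp
    then have "of_nat (Suc k) * of_nat (Suc (Suc k)) + of_nat ((k+1)*(k+2))
        = (of_nat (2*(k+1)) * of_nat (Suc (Suc k)) :: 'a)"
      by (metis of_nat_add of_nat_mult)
    then have "of_nat (Suc k) * of_nat (Suc (Suc k)) - of_nat (2*(k+1)) * of_nat (Suc (Suc k))
        + of_nat ((k+1)*(k+2)) = (0 :: 'a)"
      by (simp add: algebra_simps del: of_nat_Suc of_nat_add of_nat_mult)
    then show ?thesis using True by simp
  next
    case False
    then show ?thesis using deg \<open>k \<le> j\<close> by (simp add: coeff_eq_0)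
  qed
  finally show "coeff (euler_op c k p) m = 0" .
qed

lemma euler_op_eq_0_if_commutes:
  fixes f g :: "'a::field poly"
  assumes cop: "coprime f g" and deg_f: "degree f = k+2" and deg_g: "degree g \<le> k+2"
    and comm: "euler_op c k f * g = f * euler_op c k g"
  shows "euler_op c k f = 0 \<and> euler_op c k g = 0"
proof -
  have "f dvd euler_op c k f * g" unfolding comm by simp
  then have dvd: "f dvd euler_op c k f" by (rule coprime_dvd_mult_cancel[OF cop])
  have Lf: "euler_op c k f = 0"
  proof (rule ccontr)
    assume "euler_op c k f \<noteq> 0"
    then have "degree f \<le> degree (euler_op c k f)" by (rule dvd_imp_degree_le[OF dvd])
    then show False using degree_euler_op[of f k c] deg_f by simp
  qed
  moreover have "f \<noteq> 0" using deg_f by auto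
  ultimately show ?thesis using comm by simp
qed

lemma of_nat_eq_0_if_wronskian_eq_power:
  fixes f g :: "'a::field poly"
  assumes cop: "coprime f g" and deg: "max (degree f) (degree g) = k+2"
    and W: "wronskian f g = smult u ([:-c,1:] ^ (2*k+2))"
  shows "(of_nat ((k+1)*(k+2)) :: 'a) = 0"
proof -
  let ?x = "[:-c,1:]"
  have "pderiv (wronskian f g) = smult (of_nat (2*(k+1)) * u) (?x ^ (2*k+1))"
    using pderiv_power_Suc[of ?x "2*k+1"] unfolding W
    by (simp add: pderiv_smult pderiv_pCons mult_ac)
  then have "?x * (?x * pderiv (wronskian f g))
      = smult (of_nat (2*(k+1))) (?x * wronskian f g)"
    unfolding W by (simp add: mult_smult_right power_Suc[symmetric] mult_ac del: power_Suc)
  then have comm: "euler_op c k f * g = f * euler_op c k g"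
    using euler_op_wronskian[of c k f g] by simp
  have "euler_op c k f = 0 \<and> euler_op c k g = 0"
  proof (cases "degree f = k+2")
    case True
    then show ?thesis using euler_op_eq_0_if_commutes[OF cop True _ comm] deg by simp
  next
    case False
    then have "degree g = k+2" "degree f \<le> k+2" using deg by (auto simp: max_def split: if_splits)
    then show ?thesis
      using euler_op_eq_0_if_commutes[of g f k c] cop comm
      by (auto simp: coprime_commute mult.commute)
  qed
  then have "of_nat ((k+1)*(k+2)) * poly f c = (0::'a)"
    and "of_nat ((k+1)*(k+2)) * poly g c = (0::'a)"
    using poly_euler_op[of c k f] poly_euler_op[of c k g] by simp_all
  then show ?thesis using coprime_poly_0[OF cop, of c] by auto
qed

lemma rat_deg_le_max: "rat_deg P Q \<le> max (degree P) (degree Q)"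
  by (simp add: rat_deg_def)

lemma coprime_if_rat_deg_eq_max:
  fixes P Q :: "'a::field poly"
  assumes rd: "rat_deg P Q = max (degree P) (degree Q)" and pos: "rat_deg P Q > 0"
  shows "coprime P Q"
proof (rule coprimeI)
  fix h assume h: "h dvd P" "h dvd Q"
  let ?S = "{degree h |h. h dvd P \<and> h dvd Q}"
  have "Q \<noteq> 0" using pos by (auto simp: rat_deg_def)
  then have "?S \<subseteq> {..degree Q}" by (auto dest: dvd_imp_degree_le)
  then have "finite ?S" by (rule finite_subset) simp
  moreover have "Max ?S = 0" using rd pos \<open>Q \<noteq> 0\<close> by (simp add: rat_deg_def)
  ultimately have "degree h = 0" using h Max_ge[of ?S "degree h"] by auto
  moreover have "h \<noteq> 0" using h \<open>Q \<noteq> 0\<close> by auto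
  ultimately show "is_unit h" by (simp add: is_unit_iff_degree)
qed

section \<open>Reduction modulo the maximal ideal\<close>

lemma alg_closed_linear_factor:
  fixes P :: "'a::field poly"
  assumes "alg_closed_field TYPE('a)" and "degree P = Suc n"
  obtains r Q where "P = [:-r,1:] * Q" and "degree Q = n"
proof -
  obtain r where "poly P r = 0" using assms unfolding alg_closed_field_def by force
  then obtain Q where P: "P = [:-r,1:] * Q" using poly_eq_0_iff_dvd by blast
  with assms(2) have "Q \<noteq> 0" by auto
  then have "degree P = Suc (degree Q)" unfolding P by (subst degree_mult_eq) auto
  with assms(2) P show thesis using that by simp
qed

locale residue_reduction =
  fixes av :: "'a::field \<Rightarrow> real" and red :: "'a \<Rightarrow> 'b::field"
  assumes nonarch: "nonarch_abs av" and residue: "residue_map av red"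
begin

lemma av_nonneg: "av x \<ge> 0"
  and av_eq_0_iff [simp]: "av x = 0 \<longleftrightarrow> x = 0"
  and av_mult: "av (x * y) = av x * av y"
  and av_add_le: "av (x + y) \<le> max (av x) (av y)"
  using nonarch unfolding nonarch_abs_def by blast+

lemma av_zero [simp]: "av 0 = 0"
  by simp

lemma av_one [simp]: "av 1 = 1"
proof -
  have "av 1 = av 1 * av 1" using av_mult[of 1 1] by simp
  then show ?thesis by (simp add: mult_cancel_left1)
qed

lemma av_pos: "x \<noteq> 0 \<Longrightarrow> av x > 0"
  using av_nonneg[of x] by (simp add: less_le)

lemma av_minus_one [simp]: "av (-1) = 1"
proof -
  have "av (-1) ^ 2 = 1" using av_mult[of "-1" "-1"] by (simp add: power2_eq_square)
  then show ?thesis using av_nonneg[of "-1"] by (simp add: power2_eq_1_iff)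
qed

lemma av_uminus [simp]: "av (- x) = av x"
  using av_mult[of "-1" x] by simp

lemma av_add_le_1: "av x \<le> 1 \<Longrightarrow> av y \<le> 1 \<Longrightarrow> av (x + y) \<le> 1"
  using av_add_le[of x y] by simp

lemma av_mult_le_1: "av x \<le> 1 \<Longrightarrow> av y \<le> 1 \<Longrightarrow> av (x * y) \<le> 1"
  using av_nonneg[of x] av_nonneg[of y] by (simp add: av_mult mult_le_one)

lemma av_diff_le_1: "av x \<le> 1 \<Longrightarrow> av y \<le> 1 \<Longrightarrow> av (x - y) \<le> 1"
  using av_add_le_1[of x "-y"] by simp

lemma av_of_nat_le_1: "av (of_nat n) \<le> 1"
  by (induction n) (simp_all add: av_add_le_1)

lemma av_sum_le_1: "(\<And>i. i \<in> A \<Longrightarrow> av (h i) \<le> 1) \<Longrightarrow> av (sum h A) \<le> 1"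
  by (induction A rule: infinite_finite_induct) (simp_all add: av_add_le_1)

lemma red_add: "av x \<le> 1 \<Longrightarrow> av y \<le> 1 \<Longrightarrow> red (x + y) = red x + red y"
  and red_mult: "av x \<le> 1 \<Longrightarrow> av y \<le> 1 \<Longrightarrow> red (x * y) = red x * red y"
  and red_one [simp]: "red 1 = 1"
  and red_eq_0_iff: "av x \<le> 1 \<Longrightarrow> red x = 0 \<longleftrightarrow> av x < 1"
  using residue unfolding residue_map_def by blast+

lemma red_zero [simp]: "red 0 = 0"
  using red_eq_0_iff[of 0] by simp

lemma red_uminus: "av x \<le> 1 \<Longrightarrow> red (- x) = - red x"
  using red_add[of x "-x"] by (simp add: eq_neg_iff_add_eq_0 add.commute)

lemma red_diff: "av x \<le> 1 \<Longrightarrow> av y \<le> 1 \<Longrightarrow> red (x - y) = red x - red y"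
  using red_add[of x "-y"] red_uminus[of y] by simp

lemma red_of_nat: "red (of_nat n) = of_nat n"
  by (induction n) (simp_all add: red_add av_of_nat_le_1)

lemma red_sum: "(\<And>i. i \<in> A \<Longrightarrow> av (h i) \<le> 1) \<Longrightarrow> red (sum h A) = (\<Sum>i\<in>A. red (h i))"
  by (induction A rule: infinite_finite_induct) (simp_all add: red_add av_sum_le_1)

definition integral_poly :: "'a poly \<Rightarrow> bool" where
  "integral_poly p \<longleftrightarrow> (\<forall>i. av (coeff p i) \<le> 1)"

lemma integral_poly_diff: "integral_poly p \<Longrightarrow> integral_poly q \<Longrightarrow> integral_poly (p - q)"
  unfolding integral_poly_def by (simp add: av_diff_le_1)

lemma integral_poly_mult: "integral_poly p \<Longrightarrow> integral_poly q \<Longrightarrow> integral_poly (p * q)"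
  unfolding integral_poly_def by (simp add: coeff_mult av_sum_le_1 av_mult_le_1)

lemma integral_poly_pderiv: "integral_poly p \<Longrightarrow> integral_poly (pderiv p)"
  unfolding integral_poly_def
  by (simp add: coeff_pderiv av_mult_le_1 av_of_nat_le_1 del: of_nat_Suc)

lemma map_poly_red_diff:
  "integral_poly p \<Longrightarrow> integral_poly q \<Longrightarrow> map_poly red (p - q) = map_poly red p - map_poly red q"
  unfolding integral_poly_def by (intro poly_eqI) (simp add: coeff_map_poly red_diff)

lemma map_poly_red_mult:
  "integral_poly p \<Longrightarrow> integral_poly q \<Longrightarrow> map_poly red (p * q) = map_poly red p * map_poly red q"
  unfolding integral_poly_def
  by (intro poly_eqI) (simp add: coeff_map_poly coeff_mult red_sum av_mult_le_1 red_mult)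

lemma map_poly_red_pderiv: "integral_poly p \<Longrightarrow> map_poly red (pderiv p) = pderiv (map_poly red p)"
  unfolding integral_poly_def
  by (intro poly_eqI)
     (simp add: coeff_map_poly coeff_pderiv red_mult av_of_nat_le_1 red_of_nat del: of_nat_Suc)

lemma map_poly_red_smult:
  "av a \<le> 1 \<Longrightarrow> integral_poly p \<Longrightarrow> map_poly red (smult a p) = smult (red a) (map_poly red p)"
  unfolding integral_poly_def by (intro poly_eqI) (simp add: coeff_map_poly red_mult)

lemma map_poly_red_wronskian:
  "integral_poly f \<Longrightarrow> integral_poly g \<Longrightarrow>
     map_poly red (wronskian f g) = wronskian (map_poly red f) (map_poly red g)"
  unfolding wronskian_def
  by (simp add: map_poly_red_diff map_poly_red_mult map_poly_red_pderiv
      integral_poly_diff integral_poly_mult integral_poly_pderiv)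

text \<open>A root of absolute value \<open>> 1\<close> makes the constant term of \<open>(z - r) Q\<close> strictly dominate.\<close>

lemma av_coeff_less_av_coeff_0:
  assumes "alg_closed_field TYPE('a)" and "P \<noteq> 0"
    and "\<forall>r. poly P r = 0 \<longrightarrow> av r > 1" and "0 < j"
  shows "av (coeff P j) < av (coeff P 0)"
  using assms(2-)
proof (induction "degree P" arbitrary: P j)
  case 0
  then show ?case by (auto simp: coeff_eq_0 av_pos elim: degree_eq_zeroE)
next
  case (Suc n)
  obtain r Q where P: "P = [:-r,1:] * Q" and deg_Q: "degree Q = n"
    using alg_closed_linear_factor[OF assms(1) Suc(2)[symmetric]] .
  have roots_Q: "\<forall>x. poly Q x = 0 \<longrightarrow> av x > 1" using Suc(4) by (simp add: P)
  have "Q \<noteq> 0" and r: "av r > 1" using Suc(3,4) by (auto simp: P)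
  have IH: "\<And>i. 0 < i \<Longrightarrow> av (coeff Q i) < av (coeff Q 0)"
    using Suc(1)[OF deg_Q[symmetric] \<open>Q \<noteq> 0\<close> roots_Q] .
  have "coeff Q 0 \<noteq> 0" using roots_Q by (auto simp: poly_0_coeff_0[symmetric])
  then have Q0: "av (coeff Q 0) > 0" by (rule av_pos)
  obtain i where j: "j = Suc i" using \<open>0 < j\<close> by (cases j) auto
  have P0: "av (coeff P 0) = av r * av (coeff Q 0)" by (simp add: P av_mult)
  have high: "av (- r * coeff Q (Suc i)) < av (coeff P 0)"
    using IH[of "Suc i"] r av_nonneg[of r] by (simp add: P0 av_mult)
  have "av (coeff Q i) \<le> av (coeff Q 0)" using IH[of i] by (cases i) auto
  also have "\<dots> < av r * av (coeff Q 0)" using mult_strict_right_mono[OF r Q0] by simp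
  finally have low: "av (coeff Q i) < av (coeff P 0)" unfolding P0 .
  show ?case
    using av_add_le[of "- r * coeff Q (Suc i)" "coeff Q i"] high low by (simp add: P j)
qed

lemma integral_root_if_reduction_nonconstant:
  assumes "alg_closed_field TYPE('a)" and "integral_poly P" and "degree (map_poly red P) > 0"
  shows "\<exists>r. poly P r = 0 \<and> av r \<le> 1"
proof (rule ccontr)
  assume "\<not> ?thesis"
  then have large: "\<forall>r. poly P r = 0 \<longrightarrow> av r > 1" by auto
  have "P \<noteq> 0" using assms(3) by auto
  have "coeff (map_poly red P) i = 0" if "i > 0" for i
  proof -
    have "av (coeff P i) < 1"
      using av_coeff_less_av_coeff_0[OF assms(1) \<open>P \<noteq> 0\<close> large that] assms(2)
      unfolding integral_poly_def by (meson less_le_trans)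
    then show ?thesis by (simp add: coeff_map_poly red_eq_0_iff)
  qed
  then have "degree (map_poly red P) \<le> 0" by (intro degree_le) simp
  with assms(3) show False by simp
qed

lemma reduction_eq_power_if_roots_reduce:
  assumes "alg_closed_field TYPE('a)" and "P \<noteq> 0"
    and "\<forall>r. poly P r = 0 \<longrightarrow> av r \<le> 1 \<and> red r = c"
  shows "\<exists>Q. P = smult (lead_coeff P) Q \<and> integral_poly Q
    \<and> map_poly red Q = [:-c,1:] ^ degree P"
  using assms(2-)
proof (induction "degree P" arbitrary: P)
  case 0
  then obtain a where "P = [:a:]" by (metis degree_eq_zeroE)
  moreover have "integral_poly 1" by (simp add: integral_poly_def coeff_1)
  moreover have "map_poly red 1 = 1" by (intro poly_eqI) (simp add: coeff_map_poly coeff_1)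
  ultimately show ?case by (intro exI[of _ 1]) simp
next
  case (Suc n)
  obtain r P1 where P: "P = [:-r,1:] * P1" and deg_P1: "degree P1 = n"
    using alg_closed_linear_factor[OF assms(1) Suc(2)[symmetric]] .
  have "P1 \<noteq> 0" using Suc(3) P by auto
  have r: "av r \<le> 1" "red r = c" using Suc(4)[rule_format, of r] by (simp_all add: P)
  have roots_P1: "\<forall>x. poly P1 x = 0 \<longrightarrow> av x \<le> 1 \<and> red x = c" using Suc(4) by (simp add: P)
  obtain Q1 where Q1: "P1 = smult (lead_coeff P1) Q1" "integral_poly Q1"
    "map_poly red Q1 = [:-c,1:] ^ n"
    using Suc(1)[OF deg_P1[symmetric] \<open>P1 \<noteq> 0\<close> roots_P1] deg_P1 by blast
  have lin: "integral_poly [:-r,1:]"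
    using r by (simp add: integral_poly_def coeff_pCons split: nat.split)
  have lin_red: "map_poly red [:-r,1:] = [:-c,1:]"
    by (intro poly_eqI)
      (use r in \<open>simp add: coeff_map_poly coeff_pCons red_uminus split: nat.split\<close>)
  have lc: "lead_coeff P = lead_coeff P1" unfolding P lead_coeff_mult by simp
  have "P = smult (lead_coeff P1) ([:-r,1:] * Q1)"
    unfolding P using Q1(1) by (metis mult_smult_right)
  then have "P = smult (lead_coeff P) ([:-r,1:] * Q1)" unfolding lc .
  moreover have "integral_poly ([:-r,1:] * Q1)" using lin Q1(2) by (rule integral_poly_mult)
  moreover have "map_poly red ([:-r,1:] * Q1) = [:-c,1:] ^ degree P"
    unfolding map_poly_red_mult[OF lin Q1(2)] lin_red Q1(3) Suc(2)[symmetric] by simp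
  ultimately show ?case by blast
qed

text \<open>The Wronskian vanishes exactly at the finite critical points.  If its reduction is not
  constant, it has a root in \<open>\<O>\<^sub>k\<close>; then all critical points reduce to a finite point,
  so \<open>\<infinity>\<close> is not critical and all \<open>2d - 2\<close> roots of the Wronskian reduce to one point.\<close>

lemma reduced_wronskian_cases:
  assumes alg: "alg_closed_field TYPE('a)"
    and int: "integral_poly f" "integral_poly g"
    and no_common_root: "\<not> (\<exists>x. poly f x = 0 \<and> poly g x = 0)"
    and deg: "max (degree f) (degree g) = k+2"
    and crit: "\<exists>c. \<forall>P \<in> crit_points f g. red_pt av red P = c"
  shows "pderiv (wronskian (map_poly red f) (map_poly red g)) = 0 \<or>
    (\<exists>u c. wronskian (map_poly red f) (map_poly red g) = smult u ([:-c,1:] ^ (2*k+2)))"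
proof (cases "degree (map_poly red (wronskian f g)) = 0")
  case True
  then show ?thesis
    using map_poly_red_wronskian[OF int] by (auto simp: pderiv_pCons elim!: degree_eq_zeroE)
next
  case False
  let ?W = "wronskian f g"
  have int_W: "integral_poly ?W"
    unfolding wronskian_def using int
    by (intro integral_poly_diff integral_poly_mult integral_poly_pderiv)
  obtain r0 where r0: "poly ?W r0 = 0" "av r0 \<le> 1"
    using integral_root_if_reduction_nonconstant[OF alg int_W] False by auto
  have crit_root: "Some r \<in> crit_points f g" if "poly ?W r = 0" for r
    using crit_fin_if_wronskian_root[OF that] no_common_root by (auto simp: crit_points_def)
  obtain c where c: "\<forall>P \<in> crit_points f g. red_pt av red P = c" using crit by blast
  then have c_eq: "c = Some (red r0)" using crit_root[OF r0(1)] r0(2) by (auto simp: red_pt_def)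
  have roots: "\<forall>r. poly ?W r = 0 \<longrightarrow> av r \<le> 1 \<and> red r = red r0"
    using c c_eq crit_root by (fastforce simp: red_pt_def split: if_splits)
  have "None \<notin> crit_points f g" using c c_eq by (force simp: red_pt_def)
  then have "\<not> crit_fin (at_infty (k+2) f) (at_infty (k+2) g) 0"
    using deg by (auto simp: crit_points_def Let_def split: if_splits)
  then have deg_W: "degree ?W = 2*k+2" by (rule degree_wronskian_if_infty_not_crit[OF deg])
  have "?W \<noteq> 0" using False by auto
  then obtain Q where Q: "?W = smult (lead_coeff ?W) Q" "integral_poly Q"
    "map_poly red Q = [:-red r0,1:] ^ degree ?W"
    using reduction_eq_power_if_roots_reduce[OF alg _ roots] by blast
  have "av (lead_coeff ?W) \<le> 1" using int_W by (simp add: integral_poly_def)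
  then have "map_poly red ?W = smult (red (lead_coeff ?W)) ([:-red r0,1:] ^ (2*k+2))"
    using arg_cong[OF Q(1), of "map_poly red"] map_poly_red_smult[OF _ Q(2)] Q(3) deg_W by simp
  then show ?thesis using map_poly_red_wronskian[OF int] by auto
qed

end

section \<open>The degree modulo the residue characteristic\<close>

lemma mod_prime_eq_0_or_1:
  fixes p k :: nat
  assumes p: "prime p" and "p dvd (k+1)*(k+2)"
  shows "(k+2) mod p = 0 \<or> (k+2) mod p = 1"
proof -
  have "p dvd k+1 \<or> p dvd k+2" using assms(2) by (simp only: prime_dvd_mult_nat[OF p])
  then show ?thesis
  proof
    assume "p dvd k+1"
    then obtain q where "k+1 = p * q" ..
    then have "(k+2) mod p = (1 + q * p) mod p" by (simp add: mult.commute)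
    also have "\<dots> = 1 mod p" by (rule mod_mult_self1)
    also have "\<dots> = 1" using prime_gt_1_nat[OF p] by simp
    finally show ?thesis ..
  qed simp
qed

theorem corollary1p7:
  fixes av :: "'a::field \<Rightarrow> real"
    and red :: "'a \<Rightarrow> 'b::field"
    and f g :: "'a poly"
  assumes "nonarch_abs av" and "nontrivial_abs av" and "complete_abs av"
    and "alg_closed_field TYPE('a)"
    and "residue_map av red"
    and "CHAR('b) > 0"
    and "\<not> (\<exists>x. poly f x = 0 \<and> poly g x = 0)"
    and "\<forall>i. av (coeff f i) \<le> 1" and "\<forall>i. av (coeff g i) \<le> 1"
    and "\<exists>i. av (coeff f i) = 1 \<or> av (coeff g i) = 1"
    and "max (degree f) (degree g) \<ge> 1"
    and "rat_deg (map_poly red f) (map_poly red g) = max (degree f) (degree g)"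
    and "\<exists>c. \<forall>P \<in> crit_points f g. red_pt av red P = c"
  shows "max (degree f) (degree g) mod CHAR('b) = 0 \<or>
         max (degree f) (degree g) mod CHAR('b) = 1"
proof -
  interpret residue_reduction av red using assms(1,5) by unfold_locales
  have p: "prime CHAR('b)" using assms(6) by (rule prime_CHAR_semidom)
  consider "max (degree f) (degree g) = 1" | k where "max (degree f) (degree g) = k+2"
    using assms(11) by (metis add_2_eq_Suc' le_neq_implies_less less_natE plus_1_eq_Suc)
  then show ?thesis
  proof cases
    case 1
    then show ?thesis using prime_gt_1_nat[OF p] by simp
  next
    case (2 k)
    let ?f = "map_poly red f" and ?g = "map_poly red g"
    have "max (degree ?f) (degree ?g) \<le> k+2"
      using 2 map_poly_degree_leq[of red f] map_poly_degree_leq[of red g] by (metis max.mono)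
    then have deg: "max (degree ?f) (degree ?g) = k+2" and "coprime ?f ?g"
      using rat_deg_le_max[of ?f ?g] assms(12) 2 by (auto intro: coprime_if_rat_deg_eq_max)
    have "pderiv (wronskian ?f ?g) = 0
        \<or> (\<exists>u c. wronskian ?f ?g = smult u ([:-c,1:] ^ (2*k+2)))"
      using reduced_wronskian_cases[OF assms(4) _ _ assms(7) 2 assms(13)] assms(8,9)
      by (simp add: integral_poly_def)
    then have "(of_nat ((k+1)*(k+2)) :: 'b) = 0"
      using of_nat_eq_0_if_pderiv_wronskian_eq_0[OF \<open>coprime ?f ?g\<close> deg]
        of_nat_eq_0_if_wronskian_eq_power[OF \<open>coprime ?f ?g\<close> deg] by blast
    then have "CHAR('b) dvd (k+1)*(k+2)" by (simp only: of_nat_eq_0_iff_char_dvd)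
    then show ?thesis using mod_prime_eq_0_or_1[OF p] 2 by simp
  qed
qed

end
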